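(* Let $\Lambda$ be a finite simple graph with vertex set $\{v_1,\dots,v_n\}$, $n\ge 3$, and let $\Gamma'=\Gamma'(\Lambda)$ be the graph constructed as follows. The vertex set of $\Gamma'$ is $\{v_1,\dots,v_n\}\cup\{a_1,a_2,a_3,b_1,b_2,b_3,c_1,\dots,c_n,d_1,d_2,d_3\}$ (all new vertices distinct). The edges of $\Gamma'$ are: all edges of $\Lambda$; $\{c_j,v_j\}$ and $\{c_j,v_{j+1}\}$ for $1\le j\le n$, where $v_{n+1}:=v_1$; $\{d_i,c_j\}$ for all $i\in\{1,2,3\}$ and $1\le j\le n$; $\{d_1,v_1\}$, $\{d_1,b_1\}$; $\{d_2,v_2\}$; $\{d_3,v_k\}$ for $3\le k\le n$, and $\{d_3,b_3\}$; $\{d_2,d_3\}$; $\{v_k,b_i\}$ for all $1\le k\le n$ and $i\in\{1,2,3\}$; $\{b_1,a_1\}$, $\{b_2,a_2\}$, $\{b_3,a_3\}$; and $\{a_1,a_2\}$, $\{a_1,a_3\}$, $\{a_2,a_3\}$. There are no other edges. Then the only graph automorphism of $\Gamma'$ is the identity.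
   Context: All graphs are finite, undirected, without loops or multiple edges. A graph automorphism is a bijection of the vertex set preserving adjacency and non-adjacency. *)

theory Defs
  imports Main
begin

text \<open>Vertices of Gamma': V k = v_k, A i = a_i, B i = b_i, C j = c_j, D i = d_i
  (indices start at 1).\<close>
datatype gv = V nat | A nat | B nat | C nat | D nat

definition gamma_verts :: "nat \<Rightarrow> gv set" where
  "gamma_verts n = V ` {1..n} \<union> A ` {1..3} \<union> B ` {1..3} \<union> C ` {1..n} \<union> D ` {1..3}"

definition base_edge :: "nat \<Rightarrow> (nat \<Rightarrow> nat \<Rightarrow> bool) \<Rightarrow> gv \<Rightarrow> gv \<Rightarrow> bool" where
  "base_edge n E x y \<longleftrightarrow>
     (\<exists>i j. x = V i \<and> y = V j \<and> i \<in> {1..n} \<and> j \<in> {1..n} \<and> E i j)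
   \<or> (\<exists>j. j \<in> {1..n} \<and> x = C j \<and> (y = V j \<or> y = V (if j = n then 1 else j + 1)))
   \<or> (\<exists>i j. i \<in> {1..3} \<and> j \<in> {1..n} \<and> x = D i \<and> y = C j)
   \<or> (x = D 1 \<and> y = V 1) \<or> (x = D 1 \<and> y = B 1)
   \<or> (x = D 2 \<and> y = V 2)
   \<or> (\<exists>k. 3 \<le> k \<and> k \<le> n \<and> x = D 3 \<and> y = V k) \<or> (x = D 3 \<and> y = B 3)
   \<or> (x = D 2 \<and> y = D 3)
   \<or> (\<exists>k i. k \<in> {1..n} \<and> i \<in> {1..3} \<and> x = V k \<and> y = B i)
   \<or> (\<exists>i. i \<in> {1..3} \<and> x = B i \<and> y = A i)
   \<or> (\<exists>i j. i \<in> {1..3} \<and> j \<in> {1..3} \<and> i \<noteq> j \<and> x = A i \<and> y = A j)"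

definition gamma_adj :: "nat \<Rightarrow> (nat \<Rightarrow> nat \<Rightarrow> bool) \<Rightarrow> gv \<Rightarrow> gv \<Rightarrow> bool" where
  "gamma_adj n E x y \<longleftrightarrow> base_edge n E x y \<or> base_edge n E y x"

definition graph_automorphism :: "'a set \<Rightarrow> ('a \<Rightarrow> 'a \<Rightarrow> bool) \<Rightarrow> ('a \<Rightarrow> 'a) \<Rightarrow> bool" where
  "graph_automorphism Vs adj f \<longleftrightarrow> bij_betw f Vs Vs \<and>
     (\<forall>x\<in>Vs. \<forall>y\<in>Vs. adj (f x) (f y) \<longleftrightarrow> adj x y)"

end

theory Submission
  imports Defs
begin

text \<open>The vertices of degree 3 are exactly a_1, a_2, a_3, so an automorphism permutes them,
  hence also their private neighbours b_i, hence the v_k (the vertices adjacent to two b's).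
  The neighbours of the b's outside these classes are d_1 and d_3, and their degrees n + 2 and 2n
  differ; this pins down d_1, d_3, then the b's, d_2, v_1 (the v next to d_1) and v_2 (the v next
  to d_2). The c_j are the common neighbours of d_1 and d_2, and walking along the cycle
  v_1 c_1 v_2 c_2 ... fixes every v_j and c_j.\<close>

definition neighbours :: "'a set \<Rightarrow> ('a \<Rightarrow> 'a \<Rightarrow> bool) \<Rightarrow> 'a \<Rightarrow> 'a set" where
  "neighbours Vs adj x = {y \<in> Vs. adj x y}"

lemma bij_betw_mem_iff_of_image_subset:
  assumes "bij_betw f X X" "finite S" "S \<subseteq> X" "f ` S \<subseteq> S" "x \<in> X"
  shows "f x \<in> S \<longleftrightarrow> x \<in> S"
proof
  have inj: "inj_on f X" using assms(1) by (rule bij_betw_imp_inj_on)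
  then have "f ` S = S" using assms(2-4) by (meson endo_inj_surj inj_on_subset)
  moreover assume "f x \<in> S"
  ultimately obtain y where "y \<in> S" "f x = f y" by blast
  then show "x \<in> S" using inj assms(3,5) by (metis inj_on_eq_iff subsetD)
next
  show "x \<in> S \<Longrightarrow> f x \<in> S" using assms(4) by blast
qed

lemma graph_automorphism_image_neighbours:
  assumes "graph_automorphism Vs adj f" "x \<in> Vs"
  shows "f ` neighbours Vs adj x = neighbours Vs adj (f x)"
proof -
  have bij: "bij_betw f Vs Vs" and adj: "\<And>y. y \<in> Vs \<Longrightarrow> adj (f x) (f y) \<longleftrightarrow> adj x y"
    using assms by (auto simp: graph_automorphism_def)
  have "f ` {y \<in> Vs. adj x y} = {z \<in> f ` Vs. adj (f x) z}"
    using adj by auto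
  then show ?thesis
    using bij by (simp add: neighbours_def bij_betw_def)
qed

lemma graph_automorphism_card_neighbours:
  assumes "graph_automorphism Vs adj f" "x \<in> Vs"
  shows "card (neighbours Vs adj (f x)) = card (neighbours Vs adj x)"
proof -
  have "inj_on f Vs"
    using assms(1) by (simp add: graph_automorphism_def bij_betw_def)
  then have "inj_on f (neighbours Vs adj x)"
    by (rule inj_on_subset) (simp add: neighbours_def)
  then show ?thesis
    using graph_automorphism_image_neighbours[OF assms] card_image by metis
qed

lemma gamma_adj_simps [simp]:
  "gamma_adj n E (V i) (V j) \<longleftrightarrow> i \<in> {1..n} \<and> j \<in> {1..n} \<and> (E i j \<or> E j i)"
  "gamma_adj n E (V k) (C j) \<longleftrightarrow> j \<in> {1..n} \<and> (k = j \<or> k = (if j = n then 1 else j + 1))"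
  "gamma_adj n E (C j) (V k) \<longleftrightarrow> j \<in> {1..n} \<and> (k = j \<or> k = (if j = n then 1 else j + 1))"
  "gamma_adj n E (V k) (D i) \<longleftrightarrow> (i = 1 \<and> k = 1) \<or> (i = 2 \<and> k = 2) \<or> (i = 3 \<and> 3 \<le> k \<and> k \<le> n)"
  "gamma_adj n E (D i) (V k) \<longleftrightarrow> (i = 1 \<and> k = 1) \<or> (i = 2 \<and> k = 2) \<or> (i = 3 \<and> 3 \<le> k \<and> k \<le> n)"
  "gamma_adj n E (V k) (B i) \<longleftrightarrow> k \<in> {1..n} \<and> i \<in> {1..3}"
  "gamma_adj n E (B i) (V k) \<longleftrightarrow> k \<in> {1..n} \<and> i \<in> {1..3}"
  "\<not> gamma_adj n E (V k) (A i)" "\<not> gamma_adj n E (A i) (V k)"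
  "\<not> gamma_adj n E (C k) (C i)"
  "gamma_adj n E (C j) (D i) \<longleftrightarrow> i \<in> {1..3} \<and> j \<in> {1..n}"
  "gamma_adj n E (D i) (C j) \<longleftrightarrow> i \<in> {1..3} \<and> j \<in> {1..n}"
  "\<not> gamma_adj n E (C k) (B i)" "\<not> gamma_adj n E (B i) (C k)"
  "\<not> gamma_adj n E (C k) (A i)" "\<not> gamma_adj n E (A i) (C k)"
  "gamma_adj n E (D i) (D j) \<longleftrightarrow> (i = 2 \<and> j = 3) \<or> (i = 3 \<and> j = 2)"
  "gamma_adj n E (D i) (B j) \<longleftrightarrow> (i = 1 \<and> j = 1) \<or> (i = 3 \<and> j = 3)"
  "gamma_adj n E (B j) (D i) \<longleftrightarrow> (i = 1 \<and> j = 1) \<or> (i = 3 \<and> j = 3)"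
  "\<not> gamma_adj n E (D k) (A i)" "\<not> gamma_adj n E (A i) (D k)"
  "\<not> gamma_adj n E (B k) (B i)"
  "gamma_adj n E (B i) (A j) \<longleftrightarrow> i = j \<and> i \<in> {1..3}"
  "gamma_adj n E (A j) (B i) \<longleftrightarrow> i = j \<and> i \<in> {1..3}"
  "gamma_adj n E (A i) (A j) \<longleftrightarrow> i \<in> {1..3} \<and> j \<in> {1..3} \<and> i \<noteq> j"
  by (auto simp: gamma_adj_def base_edge_def)

lemma mem_gamma_verts [simp]:
  "V k \<in> gamma_verts n \<longleftrightarrow> k \<in> {1..n}"
  "C k \<in> gamma_verts n \<longleftrightarrow> k \<in> {1..n}"
  "A k \<in> gamma_verts n \<longleftrightarrow> k \<in> {1..3}"
  "B k \<in> gamma_verts n \<longleftrightarrow> k \<in> {1..3}"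
  "D k \<in> gamma_verts n \<longleftrightarrow> k \<in> {1..3}"
  by (auto simp: gamma_verts_def)

lemma finite_gamma_verts [simp]: "finite (gamma_verts n)"
  by (simp add: gamma_verts_def)

lemma card_neighbours_A:
  assumes "i \<in> {1..3}"
  shows "card (neighbours (gamma_verts n) (gamma_adj n E) (A i)) = 3"
proof -
  have "neighbours (gamma_verts n) (gamma_adj n E) (A i) = insert (B i) (A ` ({1..3} - {i}))"
    unfolding neighbours_def
  proof (intro set_eqI iffI)
    fix y assume "y \<in> {y \<in> gamma_verts n. gamma_adj n E (A i) y}"
    then show "y \<in> insert (B i) (A ` ({1..3} - {i}))" by (cases y) auto
  qed (use assms in auto)
  moreover have "card ({1..3::nat} - {i}) = 2" using assms by auto
  ultimately show ?thesis by (simp add: card_image inj_on_def image_iff)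
qed

lemma four_le_card_neighbours:
  assumes "3 \<le> n" "x \<in> gamma_verts n" "x \<notin> A ` {1..3}"
  shows "4 \<le> card (neighbours (gamma_verts n) (gamma_adj n E) x)"
proof -
  obtain S where S: "S \<subseteq> neighbours (gamma_verts n) (gamma_adj n E) x" "card S = 4"
  proof (cases x)
    case (V k)
    with assms that[of "{B 1, B 2, B 3, C k}"] show ?thesis by (auto simp: neighbours_def)
  next
    case (A k)
    with assms show ?thesis by auto
  next
    case (B k)
    with assms that[of "{V 1, V 2, V 3, A k}"] show ?thesis by (auto simp: neighbours_def)
  next
    case (C k)
    with assms that[of "{V k, D 1, D 2, D 3}"] show ?thesis by (auto simp: neighbours_def)
  next
    case (D k)
    then consider "x = D 1" | "x = D 2" | "x = D 3" using assms(2) by force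
    then show ?thesis
    proof cases
      case 1 with that[of "{C 1, C 2, C 3, V 1}"] assms(1) show ?thesis by (auto simp: neighbours_def)
    next
      case 2 with that[of "{C 1, C 2, C 3, V 2}"] assms(1) show ?thesis by (auto simp: neighbours_def)
    next
      case 3 with that[of "{C 1, C 2, C 3, B 3}"] assms(1) show ?thesis by (auto simp: neighbours_def)
    qed
  qed
  then show ?thesis
    by (metis card_mono finite_gamma_verts finite_subset neighbours_def mem_Collect_eq subsetI)
qed

lemma card_neighbours_D1:
  assumes "1 \<le> n"
  shows "card (neighbours (gamma_verts n) (gamma_adj n E) (D 1)) = n + 2"
proof -
  have "neighbours (gamma_verts n) (gamma_adj n E) (D 1) = insert (V 1) (insert (B 1) (C ` {1..n}))"
    unfolding neighbours_def
  proof (intro set_eqI iffI)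
    fix y assume "y \<in> {y \<in> gamma_verts n. gamma_adj n E (D 1) y}"
    then show "y \<in> insert (V 1) (insert (B 1) (C ` {1..n}))" by (cases y) auto
  qed (use assms in auto)
  then show ?thesis by (simp add: card_image inj_on_def image_iff)
qed

lemma card_neighbours_D3:
  assumes "2 \<le> n"
  shows "card (neighbours (gamma_verts n) (gamma_adj n E) (D 3)) = 2 * n"
proof -
  have "neighbours (gamma_verts n) (gamma_adj n E) (D 3)
      = insert (B 3) (insert (D 2) (C ` {1..n} \<union> V ` {3..n}))"
    unfolding neighbours_def
  proof (intro set_eqI iffI)
    fix y assume "y \<in> {y \<in> gamma_verts n. gamma_adj n E (D 3) y}"
    then show "y \<in> insert (B 3) (insert (D 2) (C ` {1..n} \<union> V ` {3..n}))" by (cases y) auto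
  qed auto
  moreover have "card (C ` {1..n} \<union> V ` {3..n}) = n + (n - 2)"
    by (subst card_Un_disjoint) (auto simp: card_image inj_on_def)
  ultimately show ?thesis using assms by (auto simp: image_iff)
qed

locale gamma_automorphism =
  fixes n :: nat and E :: "nat \<Rightarrow> nat \<Rightarrow> bool" and f :: "gv \<Rightarrow> gv"
  assumes three_le_n: "3 \<le> n"
    and automorphism: "graph_automorphism (gamma_verts n) (gamma_adj n E) f"
begin

lemma f_bij: "bij_betw f (gamma_verts n) (gamma_verts n)"
  using automorphism by (simp add: graph_automorphism_def)

lemma f_mem: "x \<in> gamma_verts n \<Longrightarrow> f x \<in> gamma_verts n"
  using f_bij bij_betwE by blast

lemma adj_f_iff:
  "x \<in> gamma_verts n \<Longrightarrow> y \<in> gamma_verts n \<Longrightarrow> gamma_adj n E (f x) (f y) \<longleftrightarrow> gamma_adj n E x y"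
  using automorphism by (simp add: graph_automorphism_def)

lemma f_eq_iff: "x \<in> gamma_verts n \<Longrightarrow> y \<in> gamma_verts n \<Longrightarrow> f x = f y \<longleftrightarrow> x = y"
  using f_bij by (meson bij_betw_def inj_on_eq_iff)

lemma f_mem_iff_of_image_subset:
  assumes "S \<subseteq> gamma_verts n" "f ` S \<subseteq> S" "x \<in> gamma_verts n"
  shows "f x \<in> S \<longleftrightarrow> x \<in> S"
  using bij_betw_mem_iff_of_image_subset[OF f_bij finite_subset[OF assms(1) finite_gamma_verts] assms] .

lemma card_neighbours_f:
  "x \<in> gamma_verts n \<Longrightarrow>
    card (neighbours (gamma_verts n) (gamma_adj n E) (f x)) = card (neighbours (gamma_verts n) (gamma_adj n E) x)"
  using graph_automorphism_card_neighbours[OF automorphism] .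

lemma f_A_iff: "x \<in> gamma_verts n \<Longrightarrow> f x \<in> A ` {1..3} \<longleftrightarrow> x \<in> A ` {1..3}"
proof (rule f_mem_iff_of_image_subset)
  show "f ` A ` {1..3} \<subseteq> A ` {1..3}"
  proof (clarify)
    fix i :: nat assume i: "i \<in> {1..3}"
    then have "card (neighbours (gamma_verts n) (gamma_adj n E) (f (A i))) = 3"
      using card_neighbours_f card_neighbours_A by simp
    then show "f (A i) \<in> A ` {1..3}"
      using four_le_card_neighbours[OF three_le_n f_mem, of "A i" E] i by force
  qed
qed auto

lemma f_B_iff: "x \<in> gamma_verts n \<Longrightarrow> f x \<in> B ` {1..3} \<longleftrightarrow> x \<in> B ` {1..3}"
proof (rule f_mem_iff_of_image_subset)
  show "f ` B ` {1..3} \<subseteq> B ` {1..3}"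
  proof (clarify)
    fix i :: nat assume i: "i \<in> {1..3}"
    obtain j where j: "j \<in> {1..3}" "f (A i) = A j"
      using f_A_iff[of "A i"] i by auto
    have "gamma_adj n E (f (B i)) (A j)" "f (B i) \<notin> A ` {1..3}" "f (B i) \<in> gamma_verts n"
      using adj_f_iff[of "B i" "A i"] f_A_iff[of "B i"] f_mem[of "B i"] i j by auto
    then show "f (B i) \<in> B ` {1..3}" by (cases "f (B i)") auto
  qed
qed auto

lemma f_V_iff: "x \<in> gamma_verts n \<Longrightarrow> f x \<in> V ` {1..n} \<longleftrightarrow> x \<in> V ` {1..n}"
proof (rule f_mem_iff_of_image_subset)
  show "f ` V ` {1..n} \<subseteq> V ` {1..n}"
  proof (clarify)
    fix k :: nat assume k: "k \<in> {1..n}"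
    obtain i j where "f (B 1) = B i" "f (B 2) = B j"
      using f_B_iff[of "B 1"] f_B_iff[of "B 2"] by auto
    moreover have "f (B 1) \<noteq> f (B 2)" using f_eq_iff[of "B 1" "B 2"] by simp
    ultimately have ij: "f (B 1) = B i" "f (B 2) = B j" "i \<noteq> j" by auto
    have "gamma_adj n E (f (V k)) (B i)" "gamma_adj n E (f (V k)) (B j)" "f (V k) \<in> gamma_verts n"
      using adj_f_iff[of "V k" "B 1"] adj_f_iff[of "V k" "B 2"] f_mem[of "V k"] ij k by auto
    then show "f (V k) \<in> V ` {1..n}" using ij(3) by (cases "f (V k)") auto
  qed
qed auto

lemma f_D_mem_D1_D3:
  assumes "i = 1 \<or> i = 3"
  shows "f (D i) = D 1 \<or> f (D i) = D 3"
proof -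
  obtain j where j: "j \<in> {1..3}" "f (B i) = B j"
    using f_B_iff[of "B i"] assms by auto
  have "gamma_adj n E (f (D i)) (B j)" "f (D i) \<in> gamma_verts n"
    "f (D i) \<notin> V ` {1..n}" "f (D i) \<notin> A ` {1..3}"
    using adj_f_iff[of "D i" "B i"] f_mem[of "D i"] f_V_iff[of "D i"] f_A_iff[of "D i"] assms j
    by auto
  then show ?thesis by (cases "f (D i)") auto
qed

lemma f_D1: "f (D 1) = D 1" and f_D3: "f (D 3) = D 3"
proof -
  have "card (neighbours (gamma_verts n) (gamma_adj n E) (D 1))
      \<noteq> card (neighbours (gamma_verts n) (gamma_adj n E) (D 3))"
    using card_neighbours_D1[of n] card_neighbours_D3[of n] three_le_n by simp
  then show "f (D 1) = D 1" "f (D 3) = D 3"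
    using f_D_mem_D1_D3[of 1] f_D_mem_D1_D3[of 3] card_neighbours_f[of "D 1"] card_neighbours_f[of "D 3"]
    by auto
qed

lemma f_B: assumes "i \<in> {1..3}" shows "f (B i) = B i"
proof -
  obtain j where j: "j \<in> {1..3}" "f (B i) = B j"
    using f_B_iff[of "B i"] assms by auto
  have "gamma_adj n E (B j) (D 1) \<longleftrightarrow> gamma_adj n E (B i) (D 1)"
    "gamma_adj n E (B j) (D 3) \<longleftrightarrow> gamma_adj n E (B i) (D 3)"
    using adj_f_iff[of "B i" "D 1"] adj_f_iff[of "B i" "D 3"] f_D1 f_D3 assms j by auto
  then show ?thesis using assms j by auto
qed

lemma f_A: assumes "i \<in> {1..3}" shows "f (A i) = A i"
proof -
  obtain j where j: "j \<in> {1..3}" "f (A i) = A j"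
    using f_A_iff[of "A i"] assms by auto
  have "gamma_adj n E (A j) (B i)"
    using adj_f_iff[of "A i" "B i"] f_B assms j by auto
  then show ?thesis using j by simp
qed

lemma f_D2: "f (D 2) = D 2"
proof -
  have "gamma_adj n E (f (D 2)) (D 3)" "\<not> gamma_adj n E (f (D 2)) (D 1)"
    "f (D 2) \<in> gamma_verts n" "f (D 2) \<notin> V ` {1..n}" "f (D 2) \<notin> B ` {1..3}"
    using adj_f_iff[of "D 2" "D 3"] adj_f_iff[of "D 2" "D 1"] f_D1 f_D3
      f_mem[of "D 2"] f_V_iff[of "D 2"] f_B_iff[of "D 2"]
    by auto
  then show ?thesis by (cases "f (D 2)") auto
qed

lemma f_V1: "f (V 1) = V 1" and f_V2: "f (V 2) = V 2"
proof -
  obtain k l where "k \<in> {1..n}" "f (V 1) = V k" "l \<in> {1..n}" "f (V 2) = V l"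
    using f_V_iff[of "V 1"] f_V_iff[of "V 2"] three_le_n by auto
  moreover have "gamma_adj n E (f (V 1)) (D 1)" "gamma_adj n E (f (V 2)) (D 2)"
    using adj_f_iff[of "V 1" "D 1"] adj_f_iff[of "V 2" "D 2"] f_D1 f_D2 three_le_n by auto
  ultimately show "f (V 1) = V 1" "f (V 2) = V 2" by auto
qed

lemma f_C_mem: assumes "j \<in> {1..n}" shows "\<exists>k \<in> {1..n}. f (C j) = C k"
proof -
  have "gamma_adj n E (f (C j)) (D 1)" "gamma_adj n E (f (C j)) (D 2)" "f (C j) \<in> gamma_verts n"
    using adj_f_iff[of "C j" "D 1"] adj_f_iff[of "C j" "D 2"] f_D1 f_D2 f_mem[of "C j"] assms
    by auto
  then show ?thesis by (cases "f (C j)") auto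
qed

lemma f_C1: "f (C 1) = C 1"
proof -
  obtain k where k: "k \<in> {1..n}" "f (C 1) = C k"
    using f_C_mem[of 1] three_le_n by auto
  have "gamma_adj n E (C k) (V 1)" "gamma_adj n E (C k) (V 2)"
    using adj_f_iff[of "C 1" "V 1"] adj_f_iff[of "C 1" "V 2"] f_V1 f_V2 k three_le_n by auto
  then show ?thesis using k three_le_n by (auto split: if_splits)
qed

lemma f_V_C_Suc:
  assumes j: "1 \<le> j" "j < n" and fixed: "f (V j) = V j" "f (C j) = C j"
  shows "f (V (Suc j)) = V (Suc j) \<and> f (C (Suc j)) = C (Suc j)"
proof
  obtain k where k: "k \<in> {1..n}" "f (V (Suc j)) = V k"
    using f_V_iff[of "V (Suc j)"] j by auto
  have "k \<noteq> j" "gamma_adj n E (V k) (C j)"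
    using f_eq_iff[of "V (Suc j)" "V j"] adj_f_iff[of "V (Suc j)" "C j"] fixed k j by auto
  then show V_Suc: "f (V (Suc j)) = V (Suc j)" using k j by (auto split: if_splits)
  obtain m where m: "m \<in> {1..n}" "f (C (Suc j)) = C m"
    using f_C_mem[of "Suc j"] j by auto
  have "m \<noteq> j" "gamma_adj n E (C m) (V (Suc j))"
    using f_eq_iff[of "C (Suc j)" "C j"] adj_f_iff[of "C (Suc j)" "V (Suc j)"] fixed V_Suc m j
    by auto
  then show "f (C (Suc j)) = C (Suc j)" using m j by (auto split: if_splits)
qed

lemma f_V_C: assumes "j \<in> {1..n}" shows "f (V j) = V j \<and> f (C j) = C j"
proof -
  have "1 \<le> j" "j \<le> n" using assms by auto
  then show ?thesis
  proof (induction j rule: nat_induct_at_least)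
    case base
    then show ?case using f_V1 f_C1 by simp
  next
    case (Suc j)
    then show ?case using f_V_C_Suc by simp
  qed
qed

lemma f_eq_self: assumes "x \<in> gamma_verts n" shows "f x = x"
proof (cases x)
  case (D i)
  then have "i = 1 \<or> i = 2 \<or> i = 3" using assms by auto
  then show ?thesis using D f_D1 f_D2 f_D3 by auto
qed (use assms f_V_C f_A f_B in auto)

end

theorem lemma3p8:
  fixes n :: nat and E :: "nat \<Rightarrow> nat \<Rightarrow> bool" and f :: "gv \<Rightarrow> gv"
  assumes "n \<ge> 3"
    and "\<And>i j. i \<in> {1..n} \<Longrightarrow> j \<in> {1..n} \<Longrightarrow> E i j \<Longrightarrow> E j i"
    and "\<And>i. i \<in> {1..n} \<Longrightarrow> \<not> E i i"
    and "graph_automorphism (gamma_verts n) (gamma_adj n E) f"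
  shows "\<forall>x\<in>gamma_verts n. f x = x"
proof -
  interpret gamma_automorphism n E f
    using assms(1,4) by unfold_locales
  show ?thesis using f_eq_self by blast
qed

end
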